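(* Let $F$ be a distribution function whose hazard rate $h$ satisfies (H) and is regularly varying of index $-1$. Then for all positive numbers $a,b,c$, $$\overline F(t/a)\,\overline F(t/b)=o\big(\overline F(t/c)\big)\qquad(t\to\infty),$$ i.e. $\overline{\mathsf M_aF}\,\overline{\mathsf M_bF}=o(\overline{\mathsf M_cF})$.
   Context: For a distribution function $F$, $\overline F=1-F$, and for $c>0$, $\mathsf M_cF$ is the distribution of $cY$ with $Y\sim F$, so $\overline{\mathsf M_cF}(t)=\overline F(t/c)$. The hazard rate is $h=F'/\overline F$, assumed to exist for all large $t$, so that $\overline F(t)=\overline F(t_0)\exp(-\int_{t_0}^th(u)\,du)$. Condition (H): $h$ is regularly varying, $\lim_{t\to\infty}th(t)=+\infty$, $\lim_{t\to\infty}h(t)=0$. *)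

theory Defs
  imports "HOL-Analysis.Analysis" "HOL-Library.Landau_Symbols"
begin

definition distribution_function :: "(real \<Rightarrow> real) \<Rightarrow> bool" where
  "distribution_function F \<longleftrightarrow>
     mono F \<and> (\<forall>x. continuous (at_right x) F) \<and>
     (F \<longlongrightarrow> 0) at_bot \<and> (F \<longlongrightarrow> 1) at_top"

definition tail :: "(real \<Rightarrow> real) \<Rightarrow> real \<Rightarrow> real" where
  "tail F t = 1 - F t"

text \<open>M_c F: the distribution of c Y for Y ~ F (c > 0), i.e. (M_c F)(t) = F(t/c).\<close>
definition scale_dist :: "real \<Rightarrow> (real \<Rightarrow> real) \<Rightarrow> real \<Rightarrow> real" where
  "scale_dist c F t = F (t / c)"

definition hazard_rate :: "(real \<Rightarrow> real) \<Rightarrow> (real \<Rightarrow> real) \<Rightarrow> bool" where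
  "hazard_rate F h \<longleftrightarrow>
     (\<exists>t0. \<forall>t\<ge>t0. tail F t > 0 \<and> (F has_real_derivative (h t * tail F t)) (at t))"

definition regularly_varying :: "real \<Rightarrow> (real \<Rightarrow> real) \<Rightarrow> bool" where
  "regularly_varying \<rho> h \<longleftrightarrow>
     eventually (\<lambda>t. h t > 0) at_top \<and>
     (\<forall>s>0. ((\<lambda>t. h (s * t) / h t) \<longlongrightarrow> s powr \<rho>) at_top)"

definition cond_H :: "(real \<Rightarrow> real) \<Rightarrow> bool" where
  "cond_H h \<longleftrightarrow> (\<exists>\<rho>. regularly_varying \<rho> h) \<and>
     filterlim (\<lambda>t. t * h t) at_top at_top \<and> (h \<longlongrightarrow> 0) at_top"

end

(*
  Write tail F = exp (- g) for large t, where the cumulative hazard g has derivative h.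
  If a <= c, then tail F (t/a) <= tail F (t/c) and the remaining factor tail F (t/b) tends to 0.
  If a > c, index -1 makes lam * h (lam * t) ~ h t, so the increment of g over [lam x, lam s x]
  is eventually at least half its increment over [x, s x]. With s = a/c and k = c^2/(a^2 b),
  the interval [k t, t/b] is the union of two such rescalings of [t/a, t/c], whence
  g (t/c) - g (t/a) <= g (t/b) - g (k t), i.e. tail F (t/a) tail F (t/b) <= tail F (t/c) tail F (k t).
*)
theory Submission
  imports Defs
begin

lemma smallo_of_le_mult_tendsto_zero:
  fixes f g u :: "'a \<Rightarrow> real"
  assumes bound: "eventually (\<lambda>x. 0 \<le> f x \<and> f x \<le> g x * u x) F"
    and u: "(u \<longlongrightarrow> 0) F"
  shows "f \<in> o[F](g)"
proof (rule landau_o.smallI)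
  fix \<epsilon> :: real
  assume "\<epsilon> > 0"
  with u have "eventually (\<lambda>x. \<bar>u x\<bar> < \<epsilon>) F"
    by (auto dest: tendstoD)
  with bound show "eventually (\<lambda>x. norm (f x) \<le> \<epsilon> * norm (g x)) F"
  proof eventually_elim
    case (elim x)
    have "\<bar>f x\<bar> \<le> \<bar>g x\<bar> * \<bar>u x\<bar>"
      using elim by (simp add: abs_mult[symmetric])
    also have "\<dots> \<le> \<bar>g x\<bar> * \<epsilon>"
      using elim by (intro mult_left_mono) auto
    finally show ?case
      by (simp add: mult.commute)
  qed
qed

lemma filterlim_at_top_cmult:
  fixes k :: real
  assumes "k > 0"
  shows "filterlim (\<lambda>t. k * t) at_top at_top"
  by (rule filterlim_tendsto_pos_mult_at_top[OF tendsto_const assms filterlim_ident])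

lemma tail_scale_dist [simp]: "tail (scale_dist c F) t = tail F (t / c)"
  by (simp add: tail_def scale_dist_def)

lemma distribution_function_tail_antimono:
  assumes "distribution_function F" and "x \<le> y"
  shows "tail F y \<le> tail F x"
  using assms by (auto simp: distribution_function_def tail_def mono_def)

lemma distribution_function_tail_tendsto_zero:
  assumes "distribution_function F"
  shows "(tail F \<longlongrightarrow> 0) at_top"
proof -
  have "((\<lambda>t. 1 - F t) \<longlongrightarrow> 1 - 1) at_top"
    using assms unfolding distribution_function_def by (intro tendsto_diff tendsto_const) auto
  then show ?thesis
    by (simp add: tail_def[abs_def])
qed

lemma distribution_function_tail_nonneg:
  assumes "distribution_function F"
  shows "tail F t \<ge> 0"
proof (rule tendsto_le[OF trivial_limit_at_top_linorder tendsto_const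
      distribution_function_tail_tendsto_zero[OF assms]])
  show "eventually (\<lambda>x. tail F x \<le> tail F t) at_top"
    using distribution_function_tail_antimono[OF assms]
    by (auto simp: eventually_at_top_linorder)
qed

definition cumulative_hazard :: "(real \<Rightarrow> real) \<Rightarrow> real \<Rightarrow> real" where
  "cumulative_hazard F t = - ln (tail F t)"

lemma hazard_rate_tail_eq_exp:
  assumes "hazard_rate F h"
  shows "eventually (\<lambda>t. tail F t = exp (- cumulative_hazard F t)) at_top"
  using assms unfolding hazard_rate_def cumulative_hazard_def eventually_at_top_linorder
  by (metis exp_ln minus_minus)

lemma hazard_rate_cumulative_hazard_deriv:
  assumes "hazard_rate F h"
  shows "eventually (\<lambda>t. (cumulative_hazard F has_real_derivative h t) (at t)) at_top"
proof -
  obtain t0 where t0: "\<And>t. t \<ge> t0 \<Longrightarrow> tail F t > 0 \<and> (F has_real_derivative h t * (1 - F t)) (at t)"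
    using assms unfolding hazard_rate_def tail_def by blast
  have "((\<lambda>t. - ln (1 - F t)) has_real_derivative h t) (at t)" if "t \<ge> t0" for t
    using t0[OF that] by (auto intro!: derivative_eq_intros simp: tail_def)
  then show ?thesis
    unfolding eventually_at_top_linorder cumulative_hazard_def[abs_def] tail_def by blast
qed

lemma regularly_varying_minus_one_scaled_gt_half:
  assumes "regularly_varying (-1) h" and "lam > 0"
  shows "eventually (\<lambda>t. h t / 2 < lam * h (lam * t)) at_top"
proof -
  have "((\<lambda>t. lam * (h (lam * t) / h t)) \<longlongrightarrow> lam * lam powr (-1)) at_top"
    using assms unfolding regularly_varying_def by (intro tendsto_mult tendsto_const) auto
  moreover have "lam * lam powr (-1) = 1"
    using assms(2) by (simp add: powr_minus)
  ultimately have "((\<lambda>t. lam * (h (lam * t) / h t)) \<longlongrightarrow> 1) at_top"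
    by simp
  then have "eventually (\<lambda>t. 1 / 2 < lam * (h (lam * t) / h t)) at_top"
    by (rule order_tendstoD) simp
  moreover have "eventually (\<lambda>t. h t > 0) at_top"
    using assms(1) unfolding regularly_varying_def by blast
  ultimately show ?thesis
    by eventually_elim (simp add: field_simps)
qed

lemma increment_scaled_ge_half:
  fixes g h :: "real \<Rightarrow> real"
  assumes deriv: "eventually (\<lambda>t. (g has_real_derivative h t) (at t)) at_top"
    and half: "eventually (\<lambda>t. h t / 2 < lam * h (lam * t)) at_top"
    and "lam > 0" and "s > 1"
  shows "eventually (\<lambda>x. (g (s * x) - g x) / 2 \<le> g (lam * (s * x)) - g (lam * x)) at_top"
proof -
  have "eventually (\<lambda>y. (g has_real_derivative h y) (at y) \<and>
      (g has_real_derivative h (lam * y)) (at (lam * y)) \<and> h y / 2 < lam * h (lam * y)) at_top"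
    using deriv eventually_compose_filterlim[OF deriv filterlim_at_top_cmult[OF \<open>lam > 0\<close>]] half
    by eventually_elim blast
  then have "eventually (\<lambda>x. \<forall>y\<ge>x. (g has_real_derivative h y) (at y) \<and>
      (g has_real_derivative h (lam * y)) (at (lam * y)) \<and> h y / 2 < lam * h (lam * y)) at_top"
    by (rule eventually_all_ge_at_top)
  moreover have "eventually (\<lambda>x. x > (0::real)) at_top"
    by (rule eventually_gt_at_top)
  ultimately show ?thesis
  proof eventually_elim
    case (elim x)
    have "x < s * x"
      using elim \<open>s > 1\<close> by simp
    then have "g (lam * x) - g x / 2 < g (lam * (s * x)) - g (s * x) / 2"
    proof (rule DERIV_pos_imp_increasing[where f = "\<lambda>y. g (lam * y) - g y / 2"])
      fix y
      assume "x \<le> y"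
      with elim have gy: "(g has_real_derivative h y) (at y)"
        and gly: "(g has_real_derivative h (lam * y)) (at (lam * y))"
        and hy: "h y / 2 < lam * h (lam * y)"
        by auto
      have "((\<lambda>y. g (lam * y) - g y / 2) has_real_derivative h (lam * y) * lam - h y / 2) (at y)"
        by (intro DERIV_diff DERIV_cdivide gy DERIV_chain2[where g = "\<lambda>y. lam * y", OF gly])
          (auto intro!: derivative_eq_intros)
      with hy show "\<exists>d. ((\<lambda>y. g (lam * y) - g y / 2) has_real_derivative d) (at y) \<and> d > 0"
        by (intro exI[of _ "h (lam * y) * lam - h y / 2"]) (simp add: mult.commute)
    qed
    then show ?case
      by simp
  qed
qed

lemma regularly_varying_minus_one_antiderivative_sum_le:
  fixes g h :: "real \<Rightarrow> real"
  assumes deriv: "eventually (\<lambda>t. (g has_real_derivative h t) (at t)) at_top"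
    and rv: "regularly_varying (-1) h"
    and "a > 0" "b > 0" "c > 0" "c < a"
  shows "eventually (\<lambda>t. g (t / c) + g (c * c / (a * a * b) * t) \<le> g (t / a) + g (t / b)) at_top"
proof -
  define s where "s = a / c"
  have "s > 1"
    using assms by (simp add: s_def)
  have inc: "eventually (\<lambda>t. (g (s * (t / a)) - g (t / a)) / 2
      \<le> g (lam * (s * (t / a))) - g (lam * (t / a))) at_top" if "lam > 0" for lam
  proof -
    have "filterlim (\<lambda>t. t / a) at_top at_top"
      using filterlim_at_top_cmult[of "1 / a"] \<open>a > 0\<close> by simp
    with increment_scaled_ge_half[OF deriv regularly_varying_minus_one_scaled_gt_half[OF rv that]
        that \<open>s > 1\<close>]
    show ?thesis
      by (rule eventually_compose_filterlim)
  qed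
  have "c / b > 0" "c * c / (a * b) > 0"
    using assms by simp_all
  from inc[OF this(1)] inc[OF this(2)] show ?thesis
  proof eventually_elim
    case (elim t)
    have "s * (t / a) = t / c" "c / b * (t / c) = t / b" "c / b * (t / a) = c * t / (a * b)"
      "c * c / (a * b) * (t / c) = c * t / (a * b)" "c * c / (a * b) * (t / a) = c * c / (a * a * b) * t"
      using assms by (simp_all add: s_def field_simps)
    with elim have "(g (t / c) - g (t / a)) / 2 \<le> g (t / b) - g (c * t / (a * b))"
      "(g (t / c) - g (t / a)) / 2 \<le> g (c * t / (a * b)) - g (c * c / (a * a * b) * t)"
      by (simp_all only:)
    then show ?case
      by simp
  qed
qed

lemma tail_product_le_tail_mult:
  assumes F: "distribution_function F" and haz: "hazard_rate F h" and rv: "regularly_varying (-1) h"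
    and "a > 0" "b > 0" "c > 0"
  obtains k where "k > 0"
    and "eventually (\<lambda>t. tail F (t / a) * tail F (t / b) \<le> tail F (t / c) * tail F (k * t)) at_top"
proof (cases "a \<le> c")
  case True
  have "eventually (\<lambda>t. tail F (t / a) * tail F (t / b) \<le> tail F (t / c) * tail F (1 / b * t)) at_top"
    using eventually_ge_at_top[of "0::real"]
  proof eventually_elim
    case (elim t)
    have "t / c \<le> t / a"
      using True elim \<open>a > 0\<close> by (simp add: frac_le)
    then have "tail F (t / a) \<le> tail F (t / c)"
      by (rule distribution_function_tail_antimono[OF F])
    then show ?case
      by (simp add: mult_right_mono distribution_function_tail_nonneg[OF F])
  qed
  with that[of "1 / b"] \<open>b > 0\<close> show ?thesis
    by simp
next
  case False
  define k where "k = c * c / (a * a * b)"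
  define g where "g = cumulative_hazard F"
  have "k > 0"
    using assms by (simp add: k_def)
  have tail_exp: "eventually (\<lambda>t. tail F (r * t) = exp (- g (r * t))) at_top" if "r > 0" for r
    using eventually_compose_filterlim[OF hazard_rate_tail_eq_exp[OF haz] filterlim_at_top_cmult[OF that]]
    by (simp add: g_def)
  have "eventually (\<lambda>t. g (t / c) + g (k * t) \<le> g (t / a) + g (t / b)) at_top"
    unfolding k_def g_def using False assms
    by (intro regularly_varying_minus_one_antiderivative_sum_le hazard_rate_cumulative_hazard_deriv) auto
  moreover have "1 / a > 0" "1 / b > 0" "1 / c > 0"
    using assms by simp_all
  note tail_exp[OF this(1)] tail_exp[OF this(2)] tail_exp[OF this(3)] tail_exp[OF \<open>k > 0\<close>]
  ultimately have "eventually (\<lambda>t. tail F (t / a) * tail F (t / b) \<le> tail F (t / c) * tail F (k * t)) at_top"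
  proof eventually_elim
    case (elim t)
    then show ?case
      using assms by (simp add: exp_minus_inverse exp_add[symmetric] field_simps)
  qed
  with that \<open>k > 0\<close> show ?thesis
    by blast
qed

theorem lemma4p3p1:
  fixes F h :: "real \<Rightarrow> real" and a b c :: real
  assumes "distribution_function F"
    and "hazard_rate F h"
    and "cond_H h"
    and "regularly_varying (-1) h"
    and "a > 0" and "b > 0" and "c > 0"
  shows "(\<lambda>t. tail (scale_dist a F) t * tail (scale_dist b F) t)
           \<in> o[at_top](tail (scale_dist c F))"
proof -
  obtain k where "k > 0"
    and bound: "eventually (\<lambda>t. tail F (t / a) * tail F (t / b) \<le> tail F (t / c) * tail F (k * t)) at_top"
    using tail_product_le_tail_mult assms(1,2,4-7) by blast
  have "((\<lambda>t. tail F (k * t)) \<longlongrightarrow> 0) at_top"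
    using filterlim_compose[OF distribution_function_tail_tendsto_zero[OF assms(1)]
        filterlim_at_top_cmult[OF \<open>k > 0\<close>]] .
  with bound show ?thesis
    by (auto intro!: smallo_of_le_mult_tendsto_zero
        simp: distribution_function_tail_nonneg[OF assms(1)] elim!: eventually_mono)
qed

end
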